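(* Let $(A^\bullet,\int_A)$ and $(B^\bullet,\int_B)$ be Poincaré duality $\mathbb R$-algebras of dimensions $d_A\ge1$ and $d_B\ge1$, and let $\ell_A\in A^1$, $\ell_B\in B^1$. If $A^\bullet$ satisfies $\operatorname{HR}^{\le1}_{\ell_A}$ and $B^\bullet$ satisfies $\operatorname{HR}^{\le1}_{\ell_B}$, then $((A\otimes B)^\bullet,\int_{A\otimes B})$ satisfies $\operatorname{HR}^{\le1}_{\ell_A\otimes1+1\otimes\ell_B}$.
   Context: A graded finite commutative $\mathbb R$-algebra $A^\bullet=\bigoplus_{i=0}^dA^i$ is a Poincaré duality algebra of dimension $d$ with degree map $\int:A^d\xrightarrow{\sim}\mathbb R$ if $A^0=\mathbb R$ and $(\xi,\zeta)\mapsto\int\xi\zeta$ is a non-degenerate pairing $A^i\times A^{d-i}\to\mathbb R$ for all $i$. $(A\otimes B)^k=\bigoplus_{i+j=k}A^i\otimes B^j$, a Poincaré duality algebra of dimension $d_A+d_B$ with $\int_{A\otimes B}(a\otimes b)=\int_Aa\cdot\int_Bb$. For $\ell\in A^1$ and $0\le i\le\lfloor d/2\rfloor$: $Q^i_\ell(x,y)=\int xy\ell^{d-2i}$ on $A^i$; the primitive space is $P^i_\ell=\{x\in A^i: x\ell^{d-2i+1}=0\}$; $A^\bullet$ satisfies $\operatorname{HR}^i_\ell$ if $(-1)^iQ^i_\ell$ is positive definite on $P^i_\ell$; $\operatorname{HR}^{\le1}_\ell$ means $\operatorname{HR}^0_\ell$ and $\operatorname{HR}^1_\ell$. *)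

theory Defs
  imports Complex_Main
begin

text \<open>A graded finite commutative real algebra is modelled as a type 'a of class
  real_algebra_1 and comm_ring_1 (the whole type is the algebra), together with a
  family of graded pieces G :: nat => 'a set.\<close>

definition graded_fin_alg :: "(nat \<Rightarrow> 'a::{real_algebra_1,comm_ring_1} set) \<Rightarrow> nat \<Rightarrow> bool" where
  "graded_fin_alg G d \<longleftrightarrow>
     (\<exists>S. finite S \<and> span S = (UNIV :: 'a set)) \<and>
     (\<forall>i. subspace (G i)) \<and>
     (\<forall>i>d. G i = {0}) \<and>
     (\<forall>i j. \<forall>x\<in>G i. \<forall>y\<in>G j. x * y \<in> G (i + j)) \<and>
     (\<forall>x::'a. \<exists>!f. (\<forall>i. f i \<in> G i) \<and> (\<forall>i>d. f i = 0) \<and> x = (\<Sum>i\<le>d. f i))"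

definition pd_algebra ::
  "(nat \<Rightarrow> 'a::{real_algebra_1,comm_ring_1} set) \<Rightarrow> nat \<Rightarrow> ('a \<Rightarrow> real) \<Rightarrow> bool" where
  "pd_algebra G d I \<longleftrightarrow>
     graded_fin_alg G d \<and>
     G 0 = range of_real \<and>
     (\<forall>x\<in>G d. \<forall>y\<in>G d. I (x + y) = I x + I y) \<and>
     (\<forall>x\<in>G d. \<forall>c. I (c *\<^sub>R x) = c * I x) \<and>
     bij_betw I (G d) UNIV \<and>
     (\<forall>i\<le>d. \<forall>x\<in>G i. x \<noteq> 0 \<longrightarrow> (\<exists>y\<in>G (d - i). I (x * y) \<noteq> 0))"

definition HR_Q :: "('a::{real_algebra_1,comm_ring_1} \<Rightarrow> real) \<Rightarrow> nat \<Rightarrow> 'a \<Rightarrow> nat \<Rightarrow> 'a \<Rightarrow> 'a \<Rightarrow> real" where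
  "HR_Q I d l i x y = I (x * y * l ^ (d - 2 * i))"

definition primitive :: "(nat \<Rightarrow> 'a::{real_algebra_1,comm_ring_1} set) \<Rightarrow> nat \<Rightarrow> 'a \<Rightarrow> nat \<Rightarrow> 'a set" where
  "primitive G d l i = {x \<in> G i. x * l ^ (d - 2 * i + 1) = 0}"

definition HR :: "(nat \<Rightarrow> 'a::{real_algebra_1,comm_ring_1} set) \<Rightarrow> nat \<Rightarrow> ('a \<Rightarrow> real) \<Rightarrow> 'a \<Rightarrow> nat \<Rightarrow> bool" where
  "HR G d I l i \<longleftrightarrow> (i \<le> d div 2 \<longrightarrow>
     (\<forall>x\<in>primitive G d l i. x \<noteq> 0 \<longrightarrow> (-1) ^ i * HR_Q I d l i x x > 0))"

definition HR_le1 :: "(nat \<Rightarrow> 'a::{real_algebra_1,comm_ring_1} set) \<Rightarrow> nat \<Rightarrow> ('a \<Rightarrow> real) \<Rightarrow> 'a \<Rightarrow> bool" where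
  "HR_le1 G d I l \<longleftrightarrow> HR G d I l 0 \<and> HR G d I l 1"

text \<open>(C, GC, IC) together with t (written a \<otimes> b = t a b) is the tensor product of the
  Poincare duality algebras (A,GA,IA) and (B,GB,IB): t is bilinear, sends some basis
  product to a basis of C, is multiplicative, the grading of C is the tensor grading,
  and the degree map is the product of degree maps.\<close>

definition tensor_pd_algebra ::
  "(nat \<Rightarrow> 'a::{real_algebra_1,comm_ring_1} set) \<Rightarrow> nat \<Rightarrow> ('a \<Rightarrow> real) \<Rightarrow>
   (nat \<Rightarrow> 'b::{real_algebra_1,comm_ring_1} set) \<Rightarrow> nat \<Rightarrow> ('b \<Rightarrow> real) \<Rightarrow>
   ('a \<Rightarrow> 'b \<Rightarrow> 'c::{real_algebra_1,comm_ring_1}) \<Rightarrow>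
   (nat \<Rightarrow> 'c set) \<Rightarrow> ('c \<Rightarrow> real) \<Rightarrow> bool" where
  "tensor_pd_algebra GA dA IA GB dB IB t GC IC \<longleftrightarrow>
     (\<forall>a. linear (t a)) \<and> (\<forall>b. linear (\<lambda>a. t a b)) \<and>
     (\<exists>BA BB. independent BA \<and> span BA = (UNIV :: 'a set) \<and>
              independent BB \<and> span BB = (UNIV :: 'b set) \<and>
              inj_on (\<lambda>(a, b). t a b) (BA \<times> BB) \<and>
              independent ((\<lambda>(a, b). t a b) ` (BA \<times> BB)) \<and>
              span ((\<lambda>(a, b). t a b) ` (BA \<times> BB)) = (UNIV :: 'c set)) \<and>
     (\<forall>a a' b b'. t a b * t a' b' = t (a * a') (b * b')) \<and>
     t 1 1 = 1 \<and>
     (\<forall>k. GC k = span {t a b | a b i j. i + j = k \<and> a \<in> GA i \<and> b \<in> GB j}) \<and>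
     (\<forall>x\<in>GC (dA + dB). \<forall>y\<in>GC (dA + dB). IC (x + y) = IC x + IC y) \<and>
     (\<forall>x\<in>GC (dA + dB). \<forall>c. IC (c *\<^sub>R x) = c * IC x) \<and>
     (\<forall>a\<in>GA dA. \<forall>b\<in>GB dB. IC (t a b) = IA a * IB b)"

end

theory Submission
  imports Defs
begin

(*
  HR^{<=1} for l in degree one says that Q(x, y) = \<integral> x y l^(d-2) on degree one is Lorentzian:
  \<integral> l^d > 0, and Q is negative definite on the classes x with \<integral> x l^(d-1) = 0; equivalently the
  reverse Cauchy-Schwarz inequality Q(x, x) \<integral> l^d <= (\<integral> x l^(d-1))^2 holds, strictly away
  from multiples of l.  In A \<otimes> B the degree-0 part is the scalars and the degree-1 part is
  A^1 \<otimes> 1 + 1 \<otimes> B^1, and by the binomial theorem only the bidegree (dA, dB) summand of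
  (lA \<otimes> 1 + 1 \<otimes> lB)^N has nonzero integral.  Hence for x = a \<otimes> 1 + 1 \<otimes> b, primitivity is one
  linear relation between \<integral> a lA^(dA-1) and \<integral> b lB^(dB-1), and Q(x, x) is a combination of
  the forms of A and B with binomial weights, which the two reverse Cauchy-Schwarz inequalities
  force to be negative.
*)

text \<open>With \<open>u = LA \<beta>\<close>, \<open>v = \<alpha> LB\<close> and \<open>m u + n v = 0\<close>, the bounds on \<open>qA\<close> and \<open>qB\<close>
  make \<open>\<alpha> \<beta>\<close> times the left-hand side at most
  \<open>m (m - 1) u\<^sup>2 + 2 m n u v + n (n - 1) v\<^sup>2 = - m (m + n) u\<^sup>2 / n\<close>, which is negative unless
  \<open>LA = LB = 0\<close>.\<close>

lemma Lorentzian_combination_neg: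
  fixes m n \<alpha> \<beta> LA LB qA qB :: real
  assumes m: "1 \<le> m" and n: "1 \<le> n" and \<alpha>: "0 < \<alpha>" and \<beta>: "0 < \<beta>"
    and qA: "qA * \<alpha> \<le> LA\<^sup>2" and qB: "qB * \<beta> \<le> LB\<^sup>2"
    and orth: "m * LA * \<beta> + n * \<alpha> * LB = 0"
    and strict: "LA = 0 \<Longrightarrow> LB = 0 \<Longrightarrow> (m - 1) * qA < 0 \<or> (n - 1) * qB < 0"
  shows "m * (m - 1) * qA * \<beta> + 2 * m * n * LA * LB + n * (n - 1) * \<alpha> * qB < 0"
    (is "?E < 0")
proof (cases "LA = 0")
  case False
  define u where "u = LA * \<beta>"
  define v where "v = \<alpha> * LB"
  have v: "n * v = - (m * u)"
    using orth by (simp add: u_def v_def algebra_simps)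
  have "m * (m - 1) * (qA * \<alpha>) * \<beta>\<^sup>2 \<le> m * (m - 1) * LA\<^sup>2 * \<beta>\<^sup>2"
    using qA m by (intro mult_right_mono mult_left_mono) auto
  moreover have "n * (n - 1) * (qB * \<beta>) * \<alpha>\<^sup>2 \<le> n * (n - 1) * LB\<^sup>2 * \<alpha>\<^sup>2"
    using qB n by (intro mult_right_mono mult_left_mono) auto
  ultimately have "?E * (\<alpha> * \<beta>) \<le> m * (m - 1) * u\<^sup>2 + 2 * m * n * u * v + n * (n - 1) * v\<^sup>2"
    by (simp add: u_def v_def power2_eq_square algebra_simps)
  also have "n\<^sup>2 * \<dots> = - (m * n * (m + n) * u\<^sup>2)"
  proof -
    have "n\<^sup>2 * (m * (m - 1) * u\<^sup>2 + 2 * m * n * u * v + n * (n - 1) * v\<^sup>2)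
        = n\<^sup>2 * m * (m - 1) * u\<^sup>2 + 2 * m * n\<^sup>2 * u * (n * v) + (n - 1) * n * (n * v)\<^sup>2"
      by (simp add: power2_eq_square algebra_simps)
    then show ?thesis
      unfolding v by (simp add: power2_eq_square algebra_simps)
  qed
  finally have "n\<^sup>2 * (?E * (\<alpha> * \<beta>)) \<le> - (m * n * (m + n) * u\<^sup>2)"
    using n by (simp add: mult_left_mono)
  moreover have "u \<noteq> 0"
    using False \<beta> by (simp add: u_def)
  then have "- (m * n * (m + n) * u\<^sup>2) < 0"
    using m n by simp
  ultimately have "n\<^sup>2 * (?E * (\<alpha> * \<beta>)) < 0"
    by linarith
  then show ?thesis
    using n \<alpha> \<beta> by (simp add: mult_less_0_iff)
next
  case True
  then have LB: "LB = 0"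
    using orth n \<alpha> by simp
  have "qA \<le> 0" "qB \<le> 0"
    using qA qB True LB \<alpha> \<beta> by (simp_all add: mult_le_0_iff)
  then have "m * (m - 1) * qA * \<beta> \<le> 0" "n * (n - 1) * \<alpha> * qB \<le> 0"
    using m n \<alpha> \<beta> by (simp_all add: mult_le_0_iff mult_nonneg_nonpos)
  moreover have "m * ((m - 1) * qA) * \<beta> < 0 \<or> n * ((n - 1) * qB) * \<alpha> < 0"
    using strict[OF True LB] m n \<alpha> \<beta> by (auto simp: mult_less_0_iff)
  ultimately show ?thesis
    using True LB by (auto simp: algebra_simps)
qed

lemma binomial_ratio_identities:
  fixes m n :: nat
  assumes "1 \<le> m" and "1 \<le> n"
  shows "(m + n - 1) * (m + n - 2 choose (m - 1)) = n * (m + n - 1 choose (m - 1))"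
    and "(m + n - 1) * (m + n - 2 choose (m - 1)) = m * (m + n - 1 choose m)"
    and "n * (if 2 \<le> m then m + n - 2 choose (m - 2) else 0) = (m - 1) * (m + n - 2 choose (m - 1))"
    and "m * (if 2 \<le> n then m + n - 2 choose m else 0) = (n - 1) * (m + n - 2 choose (m - 1))"
proof -
  obtain i j where m: "m = Suc i" and n: "n = Suc j"
    using assms by (metis Suc_le_D One_nat_def)
  show "(m + n - 1) * (m + n - 2 choose (m - 1)) = n * (m + n - 1 choose (m - 1))"
    using binomial_absorb_comp[of "Suc (i + j)" i] by (simp add: m n Suc_diff_le)
  show "(m + n - 1) * (m + n - 2 choose (m - 1)) = m * (m + n - 1 choose m)"
    using Suc_times_binomial_eq[of "i + j" i] by (simp add: m n)
  show "n * (if 2 \<le> m then m + n - 2 choose (m - 2) else 0) = (m - 1) * (m + n - 2 choose (m - 1))"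
  proof (cases i)
    case (Suc k)
    then show ?thesis
      using binomial_absorb_comp[of "i + j" k] binomial_absorption[of k "i + j"]
      by (simp add: m n)
  qed (simp add: m)
  show "m * (if 2 \<le> n then m + n - 2 choose m else 0) = (n - 1) * (m + n - 2 choose (m - 1))"
  proof (cases j)
    case (Suc k)
    then show ?thesis
      using binomial_absorb_comp[of "i + j" i] binomial_absorption[of i "i + j"]
      by (simp add: m n)
  qed (simp add: m n)
qed

lemma binomial_Lorentzian_combination_neg:
  fixes m n :: nat and \<alpha> \<beta> LA LB qA qB :: real
  assumes m: "1 \<le> m" and n: "1 \<le> n" and \<alpha>: "0 < \<alpha>" and \<beta>: "0 < \<beta>"
    and qA: "qA * \<alpha> \<le> LA\<^sup>2" and qB: "qB * \<beta> \<le> LB\<^sup>2"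
    and orth: "real (m + n - 1 choose (m - 1)) * LA * \<beta> + real (m + n - 1 choose m) * \<alpha> * LB = 0"
    and strict: "LA = 0 \<Longrightarrow> LB = 0 \<Longrightarrow> (2 \<le> m \<and> qA < 0) \<or> (2 \<le> n \<and> qB < 0)"
  shows "real (if 2 \<le> m then m + n - 2 choose (m - 2) else 0) * qA * \<beta>
    + 2 * real (m + n - 2 choose (m - 1)) * LA * LB
    + real (if 2 \<le> n then m + n - 2 choose m else 0) * \<alpha> * qB < 0"
    (is "?E < 0")
proof -
  define K where "K = real (m + n - 2 choose (m - 1))"
  have K: "K > 0"
    using m n by (simp add: K_def)
  have mn: "real (m - 1) = real m - 1" "real (n - 1) = real n - 1" "real (m + n - 1) = real m + real n - 1"
    using m n by (simp_all add: of_nat_diff)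
  define c2 where "c2 = real (if 2 \<le> m then m + n - 2 choose (m - 2) else 0)"
  define c0 where "c0 = real (if 2 \<le> n then m + n - 2 choose m else 0)"
  define C1 where "C1 = real (m + n - 1 choose (m - 1))"
  define C0 where "C0 = real (m + n - 1 choose m)"
  note ids = binomial_ratio_identities[OF m n, THEN arg_cong[where f = real],
      unfolded of_nat_mult mn, folded K_def c2_def c0_def C1_def C0_def]
  have "real m * real n * (C1 * LA * \<beta> + C0 * \<alpha> * LB) =
      real m * (real n * C1) * LA * \<beta> + real n * (real m * C0) * \<alpha> * LB"
    by (simp only: distrib_left mult_ac)
  also have "\<dots> = (real m + real n - 1) * K * (real m * LA * \<beta> + real n * \<alpha> * LB)"
    unfolding ids(1,2) [symmetric] by (simp only: distrib_left mult_ac)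
  finally have orth': "real m * LA * \<beta> + real n * \<alpha> * LB = 0"
    using orth K m n by (simp add: C1_def C0_def)
  have neg: "real m * (real m - 1) * qA * \<beta> + 2 * real m * real n * LA * LB
      + real n * (real n - 1) * \<alpha> * qB < 0"
  proof (rule Lorentzian_combination_neg[OF _ _ \<alpha> \<beta> qA qB orth'])
    show "LA = 0 \<Longrightarrow> LB = 0 \<Longrightarrow> (real m - 1) * qA < 0 \<or> (real n - 1) * qB < 0"
      using strict by (auto simp: mult_less_0_iff)
  qed (use m n in auto)
  have "real m * real n * ?E =
      real m * (real n * c2) * qA * \<beta> + 2 * real m * real n * K * LA * LB
        + real n * (real m * c0) * \<alpha> * qB"
    by (simp only: c2_def c0_def K_def distrib_left mult_ac)
  also have "\<dots> = K * (real m * (real m - 1) * qA * \<beta> + 2 * real m * real n * LA * LB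
        + real n * (real n - 1) * \<alpha> * qB)"
    unfolding ids(3,4) by (simp only: distrib_left mult_ac)
  also have "\<dots> < 0"
    using K neg by (rule mult_pos_neg)
  finally have "real m * real n * ?E < 0" .
  then show ?thesis
    using m n by (simp add: mult_less_0_iff)
qed

locale poincare_duality_algebra =
  fixes G :: "nat \<Rightarrow> 'a::{real_algebra_1,comm_ring_1} set" and d :: nat and I :: "'a \<Rightarrow> real"
  assumes pd_algebra: "pd_algebra G d I"
begin

lemma subspace_graded: "subspace (G i)"
  using pd_algebra unfolding pd_algebra_def graded_fin_alg_def by simp

lemma mult_graded: "x \<in> G i \<Longrightarrow> y \<in> G j \<Longrightarrow> x * y \<in> G (i + j)"
  using pd_algebra unfolding pd_algebra_def graded_fin_alg_def by simp

lemma graded_above_top: "x \<in> G i \<Longrightarrow> d < i \<Longrightarrow> x = 0"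
  using pd_algebra unfolding pd_algebra_def graded_fin_alg_def by auto

lemma graded_0: "G 0 = range of_real"
  using pd_algebra unfolding pd_algebra_def by simp

lemma one_graded: "1 \<in> G 0"
  unfolding graded_0 by (metis of_real_1 rangeI)

lemma power_graded: "l \<in> G 1 \<Longrightarrow> l ^ k \<in> G k"
  by (induction k) (use one_graded mult_graded[of l 1] in auto)

lemma degree_add: "x \<in> G d \<Longrightarrow> y \<in> G d \<Longrightarrow> I (x + y) = I x + I y"
  using pd_algebra unfolding pd_algebra_def by simp

lemma degree_scaleR: "x \<in> G d \<Longrightarrow> I (c *\<^sub>R x) = c * I x"
  using pd_algebra unfolding pd_algebra_def by simp

lemma degree_diff: "x \<in> G d \<Longrightarrow> y \<in> G d \<Longrightarrow> I (x - y) = I x - I y"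
  using degree_add[of x "(-1) *\<^sub>R y"] degree_scaleR[of y "-1"] subspace_graded[of d]
  by (simp add: subspace_neg)

lemma degree_0 [simp]: "I 0 = 0"
  using degree_scaleR[of 0 0] subspace_graded[of d] by (simp add: subspace_0)

lemma degree_eq_0_iff: "x \<in> G d \<Longrightarrow> I x = 0 \<longleftrightarrow> x = 0"
  using pd_algebra subspace_graded[of d] unfolding pd_algebra_def bij_betw_def
  by (metis degree_0 inj_onD subspace_0)

lemma HR_0_imp_degree_power_pos:
  assumes l: "l \<in> G 1" and HR0: "HR G d I l 0"
  shows "I (l ^ d) > 0"
proof -
  have "1 \<in> primitive G d l 0"
    using one_graded graded_above_top[OF power_graded[OF l, of "Suc d"]]
    by (simp add: primitive_def)
  then have "0 < I (1 * 1 * l ^ d)"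
    using HR0 unfolding HR_def HR_Q_def by fastforce
  then show ?thesis
    by simp
qed

lemma primitive_1I:
  assumes l: "l \<in> G 1" and x: "x \<in> G 1" and orth: "I (x * l ^ (d - 1)) = 0"
  shows "x \<in> primitive G d l 1"
proof (cases "d = 0")
  case True
  then show ?thesis
    using x graded_above_top[OF x] by (simp add: primitive_def)
next
  case False
  then have "x * l ^ (d - 1) \<in> G d"
    using mult_graded[OF x power_graded[OF l, of "d - 1"]] by simp
  then have "x * l ^ (d - 1) = 0"
    using orth degree_eq_0_iff by blast
  moreover have "d - 2 * 1 + 1 = (d - 1) + (d - 2 * 1 + 1 - (d - 1))"
    by simp
  ultimately have "x * l ^ (d - 2 * 1 + 1) = 0"
    by (metis mult_zero_left power_add mult.assoc)
  then show ?thesis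
    using x by (simp add: primitive_def)
qed

lemma HR_1_degree_square_neg:
  assumes l: "l \<in> G 1" and HR1: "HR G d I l 1"
    and x: "x \<in> G 1" "x \<noteq> 0" and orth: "I (x * l ^ (d - 1)) = 0"
  shows "2 \<le> d" and "I (x * x * l ^ (d - 2)) < 0"
proof -
  show d: "2 \<le> d"
  proof (rule ccontr)
    assume "\<not> 2 \<le> d"
    then consider "d = 0" | "d = 1"
      by linarith
    then show False
      by cases (use x orth graded_above_top[OF x(1)] degree_eq_0_iff[of x] in auto)
  qed
  then show "I (x * x * l ^ (d - 2)) < 0"
    using HR1 x primitive_1I[OF l x(1) orth] by (auto simp: HR_def HR_Q_def)
qed

text \<open>With \<open>\<alpha> = \<integral> l\<^sup>d\<close> and \<open>L = \<integral> x l\<^bsup>d-1\<^esup>\<close>, the class \<open>y = x - (L / \<alpha>) l\<close> is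
  primitive, and \<open>Q(y, y) = Q(x, x) - L\<^sup>2 / \<alpha>\<close>.\<close>

lemma HR_le1_reverse_Cauchy_Schwarz:
  assumes l: "l \<in> G 1" and HR: "HR_le1 G d I l" and x: "x \<in> G 1"
  shows "I (x * x * l ^ (d - 2)) * I (l ^ d) \<le> (I (x * l ^ (d - 1)))\<^sup>2"
proof (cases "2 \<le> d")
  case False
  have "x * x * l ^ (d - 2) \<in> G (1 + 1 + (d - 2))"
    using mult_graded[OF mult_graded[OF x x] power_graded[OF l]] .
  then have "x * x * l ^ (d - 2) = 0"
    using False graded_above_top by simp
  then show ?thesis
    by simp
next
  case True
  define \<alpha> where "\<alpha> = I (l ^ d)"
  define L where "L = I (x * l ^ (d - 1))"
  define y where "y = x - (L / \<alpha>) *\<^sub>R l"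
  have \<alpha>: "\<alpha> > 0"
    using HR_0_imp_degree_power_pos[OF l] HR by (simp add: HR_le1_def \<alpha>_def)
  have pow: "l * l ^ (d - 2) = l ^ (d - 1)" "l * l ^ (d - 1) = l ^ d"
  proof -
    have "Suc (d - 2) = d - 1" "Suc (d - 1) = d"
      using True by simp_all
    then show "l * l ^ (d - 2) = l ^ (d - 1)" "l * l ^ (d - 1) = l ^ d"
      by (metis power_Suc)+
  qed
  have top: "u \<in> G 1 \<Longrightarrow> u * l ^ (d - 1) \<in> G d" for u
    using True mult_graded[OF _ power_graded[OF l, of "d - 1"]] by fastforce
  have top2: "u \<in> G 1 \<Longrightarrow> v \<in> G 1 \<Longrightarrow> u * v * l ^ (d - 2) \<in> G d" for u v
    using True mult_graded[OF mult_graded power_graded[OF l, of "d - 2"]] by fastforce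
  have y: "y \<in> G 1"
    unfolding y_def using x l subspace_graded by (simp add: subspace_diff subspace_scale)
  have scaled: "u \<in> G d \<Longrightarrow> c *\<^sub>R u \<in> G d" for u c
    using subspace_graded by (simp add: subspace_scale)
  have "y * l ^ (d - 1) = x * l ^ (d - 1) - (L / \<alpha>) *\<^sub>R l ^ d"
    unfolding y_def by (simp only: left_diff_distrib mult_scaleR_left pow)
  then have "I (y * l ^ (d - 1)) = L - (L / \<alpha>) * \<alpha>"
    using degree_diff[OF top[OF x] scaled[OF power_graded[OF l]]]
    by (simp add: degree_scaleR[OF power_graded[OF l]] L_def \<alpha>_def)
  then have y_orth: "I (y * l ^ (d - 1)) = 0"
    using \<alpha> by simp
  have yx: "y * x * l ^ (d - 2) = x * x * l ^ (d - 2) - (L / \<alpha>) *\<^sub>R (x * l ^ (d - 1))"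
    unfolding y_def
    by (simp only: left_diff_distrib mult_scaleR_left mult.commute[of l x] mult.assoc pow)
  have yy: "y * y * l ^ (d - 2) = y * x * l ^ (d - 2) - (L / \<alpha>) *\<^sub>R (y * l ^ (d - 1))"
    by (subst (2) y_def)
      (simp only: right_diff_distrib left_diff_distrib mult_scaleR_right mult_scaleR_left
        mult.assoc pow)
  have "I (x * x * l ^ (d - 2)) - (L / \<alpha>) * L = I (y * x * l ^ (d - 2))"
    unfolding yx degree_diff[OF top2[OF x x] scaled[OF top[OF x]]] degree_scaleR[OF top[OF x]] L_def
    by simp
  also have "\<dots> = I (y * y * l ^ (d - 2))"
    unfolding yy degree_diff[OF top2[OF y x] scaled[OF top[OF y]]] degree_scaleR[OF top[OF y]] y_orth
    by simp
  also have "\<dots> \<le> 0"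
  proof (cases "y = 0")
    case False
    then show ?thesis
      using HR_1_degree_square_neg(2)[OF l _ y False y_orth] HR by (simp add: HR_le1_def)
  qed simp
  finally have "I (x * x * l ^ (d - 2)) - (L / \<alpha>) * L \<le> 0" .
  then show ?thesis
    unfolding \<alpha>_def[symmetric] L_def[symmetric] using \<alpha> by (simp add: field_simps power2_eq_square)
qed

end

locale tensor_pd_algebras =
  A: poincare_duality_algebra GA dA IA + B: poincare_duality_algebra GB dB IB
  for GA :: "nat \<Rightarrow> 'a::{real_algebra_1,comm_ring_1} set" and dA IA
    and GB :: "nat \<Rightarrow> 'b::{real_algebra_1,comm_ring_1} set" and dB IB +
  fixes t :: "'a \<Rightarrow> 'b \<Rightarrow> 'c::{real_algebra_1,comm_ring_1}"
    and GC :: "nat \<Rightarrow> 'c set" and IC :: "'c \<Rightarrow> real"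
  assumes tensor: "tensor_pd_algebra GA dA IA GB dB IB t GC IC"
begin

lemma linear_tensor_left: "linear (\<lambda>a. t a b)"
  using tensor unfolding tensor_pd_algebra_def by blast

lemma linear_tensor_right: "linear (t a)"
  using tensor unfolding tensor_pd_algebra_def by blast

lemma tensor_0_left [simp]: "t 0 b = 0"
  using linear_0[OF linear_tensor_left] by simp

lemma tensor_0_right [simp]: "t a 0 = 0"
  using linear_0[OF linear_tensor_right] .

lemma tensor_scaleR_left: "t (c *\<^sub>R a) b = c *\<^sub>R t a b"
  using linear_scale[OF linear_tensor_left] by simp

lemma tensor_scaleR_right: "t a (c *\<^sub>R b) = c *\<^sub>R t a b"
  using linear_scale[OF linear_tensor_right] .

lemma tensor_mult: "t a b * t a' b' = t (a * a') (b * b')"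
  using tensor unfolding tensor_pd_algebra_def by blast

lemma tensor_one: "t 1 1 = 1"
  using tensor unfolding tensor_pd_algebra_def by blast

lemma graded_tensor_eq: "GC k = span {t a b | a b i j. i + j = k \<and> a \<in> GA i \<and> b \<in> GB j}"
  using tensor unfolding tensor_pd_algebra_def by blast

lemma subspace_graded_tensor: "subspace (GC k)"
  unfolding graded_tensor_eq by (rule subspace_span)

lemma tensor_graded: "a \<in> GA i \<Longrightarrow> b \<in> GB j \<Longrightarrow> i + j = k \<Longrightarrow> t a b \<in> GC k"
  unfolding graded_tensor_eq by (rule span_base) blast

lemma degree_tensor_add: "x \<in> GC (dA + dB) \<Longrightarrow> y \<in> GC (dA + dB) \<Longrightarrow> IC (x + y) = IC x + IC y"
  using tensor unfolding tensor_pd_algebra_def by blast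

lemma degree_tensor_scaleR: "x \<in> GC (dA + dB) \<Longrightarrow> IC (c *\<^sub>R x) = c * IC x"
  using tensor unfolding tensor_pd_algebra_def by blast

lemma degree_tensor_0 [simp]: "IC 0 = 0"
  using degree_tensor_scaleR[of 0 0] subspace_graded_tensor by (simp add: subspace_0)

lemma degree_tensor_sum:
  "(\<And>j. j \<in> S \<Longrightarrow> y j \<in> GC (dA + dB)) \<Longrightarrow> IC (\<Sum>j\<in>S. y j) = (\<Sum>j\<in>S. IC (y j))"
proof (induction S rule: infinite_finite_induct)
  case (insert j S)
  then show ?case
    using degree_tensor_add subspace_graded_tensor by (simp add: subspace_sum)
qed simp_all

lemma degree_tensor_homogeneous:
  assumes a: "a \<in> GA i" and b: "b \<in> GB j" and top: "i + j = dA + dB"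
  shows "IC (t a b) = (if i = dA then IA a * IB b else 0)"
proof -
  consider "i = dA" | "dA < i" | "dB < j"
    using top by linarith
  then show ?thesis
  proof cases
    case 1
    then show ?thesis
      using a b top tensor unfolding tensor_pd_algebra_def by auto
  qed (use A.graded_above_top[OF a] B.graded_above_top[OF b] top in auto)
qed

lemma tensor_binomial: "(t a 1 + t 1 b) ^ N = (\<Sum>k\<le>N. real (N choose k) *\<^sub>R t (a ^ k) (b ^ (N - k)))"
proof -
  have "t a 1 ^ k = t (a ^ k) 1" "t 1 b ^ k = t 1 (b ^ k)" for k
    by (induction k) (simp_all add: tensor_one tensor_mult)
  then show ?thesis
    by (simp add: binomial_ring mult.assoc tensor_mult scaleR_conv_of_real)
qed

lemma tensor_mult_power_eq:
  "t u v * (t lA 1 + t 1 lB) ^ N = (\<Sum>k\<le>N. real (N choose k) *\<^sub>R t (u * lA ^ k) (v * lB ^ (N - k)))"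
  by (simp add: tensor_binomial sum_distrib_left tensor_mult)

lemma tensor_mult_power_graded:
  assumes u: "u \<in> GA p" and v: "v \<in> GB q" and lA: "lA \<in> GA 1" and lB: "lB \<in> GB 1"
    and k: "p + q + N = k"
  shows "t u v * (t lA 1 + t 1 lB) ^ N \<in> GC k"
  unfolding tensor_mult_power_eq
proof (intro subspace_sum[OF subspace_graded_tensor] subspace_scale[OF subspace_graded_tensor])
  fix j assume "j \<in> {..N}"
  then show "t (u * lA ^ j) (v * lB ^ (N - j)) \<in> GC k"
    using k by (intro tensor_graded[OF A.mult_graded[OF u A.power_graded[OF lA]]
          B.mult_graded[OF v B.power_graded[OF lB]]]) auto
qed

text \<open>Only the summand of bidegree \<open>(dA, dB)\<close> of the binomial expansion survives
  integration.\<close>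

lemma degree_tensor_mult_power:
  assumes u: "u \<in> GA p" and v: "v \<in> GB q" and lA: "lA \<in> GA 1" and lB: "lB \<in> GB 1"
    and top: "p + q + N = dA + dB"
  shows "IC (t u v * (t lA 1 + t 1 lB) ^ N) =
    (if p \<le> dA \<and> q \<le> dB
     then real (N choose (dA - p)) * IA (u * lA ^ (dA - p)) * IB (v * lB ^ (dB - q)) else 0)"
proof -
  have factors: "u * lA ^ k \<in> GA (p + k)" "v * lB ^ (N - k) \<in> GB (q + (N - k))" for k
    using A.mult_graded[OF u A.power_graded[OF lA]] B.mult_graded[OF v B.power_graded[OF lB]] .
  have summand_top: "k \<le> N \<Longrightarrow> t (u * lA ^ k) (v * lB ^ (N - k)) \<in> GC (dA + dB)" for k
    using top by (intro tensor_graded[OF factors]) auto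
  have "IC (t u v * (t lA 1 + t 1 lB) ^ N) =
      (\<Sum>k\<le>N. IC (real (N choose k) *\<^sub>R t (u * lA ^ k) (v * lB ^ (N - k))))"
    unfolding tensor_mult_power_eq
    using summand_top by (intro degree_tensor_sum subspace_scale[OF subspace_graded_tensor]) simp
  also have "\<dots> = (\<Sum>k\<le>N. real (N choose k) * IC (t (u * lA ^ k) (v * lB ^ (N - k))))"
    using summand_top by (intro sum.cong) (simp_all add: degree_tensor_scaleR)
  also have "\<dots> = (\<Sum>k\<le>N. if k = dA - p \<and> p \<le> dA
      then real (N choose k) * IA (u * lA ^ k) * IB (v * lB ^ (N - k)) else 0)"
  proof (intro sum.cong refl)
    fix k assume "k \<in> {..N}"
    then have "IC (t (u * lA ^ k) (v * lB ^ (N - k))) =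
        (if p + k = dA then IA (u * lA ^ k) * IB (v * lB ^ (N - k)) else 0)"
      using top by (intro degree_tensor_homogeneous[OF factors]) auto
    then show "real (N choose k) * IC (t (u * lA ^ k) (v * lB ^ (N - k))) =
        (if k = dA - p \<and> p \<le> dA
         then real (N choose k) * IA (u * lA ^ k) * IB (v * lB ^ (N - k)) else 0)"
      by auto
  qed
  also have "\<dots> = (if p \<le> dA \<and> q \<le> dB
     then real (N choose (dA - p)) * IA (u * lA ^ (dA - p)) * IB (v * lB ^ (dB - q)) else 0)"
  proof -
    have "p \<le> dA \<Longrightarrow> N - (dA - p) = dB - q"
      using top by linarith
    then show ?thesis
      using top by auto
  qed
  finally show ?thesis .
qed

lemma graded_tensor_0_subset: "GC 0 \<subseteq> range of_real"
  unfolding graded_tensor_eq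
proof (rule span_minimal)
  have "range (of_real :: real \<Rightarrow> 'c) = (\<lambda>r. r *\<^sub>R 1) ` UNIV"
    by (simp add: of_real_def)
  then show "subspace (range (of_real :: real \<Rightarrow> 'c))"
    using linear_subspace_image[OF linear_scale_left subspace_UNIV] by metis
  show "{t a b |a b i j. i + j = 0 \<and> a \<in> GA i \<and> b \<in> GB j} \<subseteq> range of_real"
  proof clarify
    fix a b assume "a \<in> GA 0" "b \<in> GB 0"
    then obtain r s where "a = r *\<^sub>R 1" "b = s *\<^sub>R 1"
      unfolding A.graded_0 B.graded_0 by (auto simp: of_real_def)
    then have "t a b = of_real (r * s)"
      by (simp add: tensor_scaleR_left tensor_scaleR_right tensor_one of_real_def)
    then show "t a b \<in> range of_real"
      by blast
  qed
qed

lemma graded_tensor_1_subset: "GC 1 \<subseteq> {t a 1 + t 1 b | a b. a \<in> GA 1 \<and> b \<in> GB 1}"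
  unfolding graded_tensor_eq
proof (rule span_minimal)
  have "{t a 1 + t 1 b | a b. a \<in> GA 1 \<and> b \<in> GB 1} =
      {x + y | x y. x \<in> (\<lambda>a. t a 1) ` GA 1 \<and> y \<in> t 1 ` GB 1}"
    by blast
  then show "subspace {t a 1 + t 1 b | a b. a \<in> GA 1 \<and> b \<in> GB 1}"
    using subspace_sums[OF linear_subspace_image[OF linear_tensor_left A.subspace_graded]
        linear_subspace_image[OF linear_tensor_right B.subspace_graded]]
    by simp
  show "{t a b |a b i j. i + j = 1 \<and> a \<in> GA i \<and> b \<in> GB j}
      \<subseteq> {t a 1 + t 1 b | a b. a \<in> GA 1 \<and> b \<in> GB 1}"
  proof clarify
    fix a b i j assume ij: "i + j = 1" and a: "a \<in> GA i" and b: "b \<in> GB j"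
    have zero: "0 \<in> GA 1" "0 \<in> GB 1"
      using A.subspace_graded B.subspace_graded by (simp_all add: subspace_0)
    consider "i = 0" "j = 1" | "i = 1" "j = 0"
      using ij by linarith
    then show "\<exists>a' b'. t a b = t a' 1 + t 1 b' \<and> a' \<in> GA 1 \<and> b' \<in> GB 1"
    proof cases
      case 1
      then obtain r where "a = r *\<^sub>R 1"
        using a 1 by (auto simp: A.graded_0 of_real_def)
      then have "t a b = t 0 1 + t 1 (r *\<^sub>R b)"
        by (simp add: tensor_scaleR_left tensor_scaleR_right)
      then show ?thesis
        using zero b 1 B.subspace_graded by (metis subspace_scale)
    next
      case 2
      then obtain r where "b = r *\<^sub>R 1"
        using b 2 by (auto simp: B.graded_0 of_real_def)
      then have "t a b = t (r *\<^sub>R a) 1 + t 1 0"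
        by (simp add: tensor_scaleR_left tensor_scaleR_right)
      then show ?thesis
        using zero a 2 A.subspace_graded by (metis subspace_scale)
    qed
  qed
qed

lemma degree_tensor_linear_form:
  assumes a: "a \<in> GA 1" and b: "b \<in> GB 1" and lA: "lA \<in> GA 1" and lB: "lB \<in> GB 1"
    and dA: "1 \<le> dA" and dB: "1 \<le> dB"
  shows "IC ((t a 1 + t 1 b) * (t lA 1 + t 1 lB) ^ (dA + dB - 1)) =
    real (dA + dB - 1 choose (dA - 1)) * IA (a * lA ^ (dA - 1)) * IB (lB ^ dB)
    + real (dA + dB - 1 choose dA) * IA (lA ^ dA) * IB (b * lB ^ (dB - 1))"
proof -
  have top: "1 + 0 + (dA + dB - 1) = dA + dB" "0 + 1 + (dA + dB - 1) = dA + dB"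
    using dA by simp_all
  show ?thesis
    unfolding distrib_right
    using degree_tensor_add[OF tensor_mult_power_graded[OF a B.one_graded lA lB top(1)]
        tensor_mult_power_graded[OF A.one_graded b lA lB top(2)]]
      degree_tensor_mult_power[OF a B.one_graded lA lB top(1)]
      degree_tensor_mult_power[OF A.one_graded b lA lB top(2)] dA dB
    by simp
qed

lemma degree_tensor_quadratic_form:
  assumes a: "a \<in> GA 1" and b: "b \<in> GB 1" and lA: "lA \<in> GA 1" and lB: "lB \<in> GB 1"
    and dA: "1 \<le> dA" and dB: "1 \<le> dB"
  shows "IC ((t a 1 + t 1 b) * (t a 1 + t 1 b) * (t lA 1 + t 1 lB) ^ (dA + dB - 2)) =
    real (if 2 \<le> dA then dA + dB - 2 choose (dA - 2) else 0) * IA (a * a * lA ^ (dA - 2)) * IB (lB ^ dB)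
    + 2 * real (dA + dB - 2 choose (dA - 1)) * IA (a * lA ^ (dA - 1)) * IB (b * lB ^ (dB - 1))
    + real (if 2 \<le> dB then dA + dB - 2 choose dA else 0) * IA (lA ^ dA) * IB (b * b * lB ^ (dB - 2))"
proof -
  let ?P = "(t lA 1 + t 1 lB) ^ (dA + dB - 2)"
  have aa: "a * a \<in> GA 2" and bb: "b * b \<in> GB 2"
    using A.mult_graded[OF a a] B.mult_graded[OF b b] by (simp_all add: numeral_2_eq_2)
  have top: "2 + 0 + (dA + dB - 2) = dA + dB" "1 + 1 + (dA + dB - 2) = dA + dB"
      "0 + 2 + (dA + dB - 2) = dA + dB"
    using dA dB by simp_all
  note X = tensor_mult_power_graded[OF aa B.one_graded lA lB top(1)]
    and Y = tensor_mult_power_graded[OF a b lA lB top(2)]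
    and Z = tensor_mult_power_graded[OF A.one_graded bb lA lB top(3)]
  note YY = subspace_add[OF subspace_graded_tensor Y Y]
  have "(t a 1 + t 1 b) * (t a 1 + t 1 b) * ?P =
      t (a * a) 1 * ?P + (t a b * ?P + t a b * ?P) + t 1 (b * b) * ?P"
    by (simp add: tensor_mult algebra_simps)
  then have "IC ((t a 1 + t 1 b) * (t a 1 + t 1 b) * ?P) =
      IC (t (a * a) 1 * ?P) + (IC (t a b * ?P) + IC (t a b * ?P)) + IC (t 1 (b * b) * ?P)"
    by (simp only: degree_tensor_add[OF subspace_add[OF subspace_graded_tensor X YY] Z]
        degree_tensor_add[OF X YY] degree_tensor_add[OF Y Y])
  then show ?thesis
    using degree_tensor_mult_power[OF aa B.one_graded lA lB top(1)]
      degree_tensor_mult_power[OF a b lA lB top(2)]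
      degree_tensor_mult_power[OF A.one_graded bb lA lB top(3)] dA dB
    by simp
qed

lemma HR_0_tensor:
  assumes lA: "lA \<in> GA 1" and lB: "lB \<in> GB 1"
    and HRA: "HR GA dA IA lA 0" and HRB: "HR GB dB IB lB 0"
  shows "HR GC (dA + dB) IC (t lA 1 + t 1 lB) 0"
  unfolding HR_def HR_Q_def
proof (intro impI ballI)
  let ?P = "(t lA 1 + t 1 lB) ^ (dA + dB)"
  fix x assume x: "x \<in> primitive GC (dA + dB) (t lA 1 + t 1 lB) 0" and "x \<noteq> 0"
  then obtain r where r: "x = of_real r" "r \<noteq> 0"
    using graded_tensor_0_subset by (auto simp: primitive_def)
  have top: "0 + 0 + (dA + dB) = dA + dB"
    by simp
  have "x * x * ?P = (r * r) *\<^sub>R (t 1 1 * ?P)"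
    using r by (simp add: tensor_one scaleR_conv_of_real)
  then have "IC (x * x * ?P) = (r * r) * IC (t 1 1 * ?P)"
    using degree_tensor_scaleR[OF tensor_mult_power_graded[OF A.one_graded B.one_graded lA lB top]]
    by simp
  also have "\<dots> = (r * r) * (real (dA + dB choose dA) * IA (lA ^ dA) * IB (lB ^ dB))"
    using degree_tensor_mult_power[OF A.one_graded B.one_graded lA lB top] by simp
  also have "\<dots> > 0"
    using r A.HR_0_imp_degree_power_pos[OF lA HRA] B.HR_0_imp_degree_power_pos[OF lB HRB]
    by (intro mult_pos_pos[of "r * r"]) (auto simp: zero_less_mult_iff)
  finally show "0 < (-1) ^ 0 * IC (x * x * (t lA 1 + t 1 lB) ^ (dA + dB - 2 * 0))"
    by simp
qed

lemma HR_1_tensor: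
  assumes lA: "lA \<in> GA 1" and lB: "lB \<in> GB 1" and dA: "1 \<le> dA" and dB: "1 \<le> dB"
    and HRA: "HR_le1 GA dA IA lA" and HRB: "HR_le1 GB dB IB lB"
  shows "HR GC (dA + dB) IC (t lA 1 + t 1 lB) 1"
  unfolding HR_def HR_Q_def
proof (intro impI ballI)
  fix x assume x: "x \<in> primitive GC (dA + dB) (t lA 1 + t 1 lB) 1" and "x \<noteq> 0"
  then obtain a b where a: "a \<in> GA 1" and b: "b \<in> GB 1" and x_eq: "x = t a 1 + t 1 b"
    using graded_tensor_1_subset by (force simp: primitive_def)
  have "dA + dB - 2 * 1 + 1 = dA + dB - 1"
    using dA dB by simp
  then have "IC (x * (t lA 1 + t 1 lB) ^ (dA + dB - 1)) = 0"
    using x by (simp add: primitive_def)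
  then have orth: "real (dA + dB - 1 choose (dA - 1)) * IA (a * lA ^ (dA - 1)) * IB (lB ^ dB)
      + real (dA + dB - 1 choose dA) * IA (lA ^ dA) * IB (b * lB ^ (dB - 1)) = 0"
    unfolding x_eq degree_tensor_linear_form[OF a b lA lB dA dB] .
  have "a \<noteq> 0 \<or> b \<noteq> 0"
    using \<open>x \<noteq> 0\<close> x_eq by auto
  then have strict: "IA (a * lA ^ (dA - 1)) = 0 \<Longrightarrow> IB (b * lB ^ (dB - 1)) = 0 \<Longrightarrow>
      (2 \<le> dA \<and> IA (a * a * lA ^ (dA - 2)) < 0) \<or> (2 \<le> dB \<and> IB (b * b * lB ^ (dB - 2)) < 0)"
    using A.HR_1_degree_square_neg[OF lA _ a] B.HR_1_degree_square_neg[OF lB _ b] HRA HRB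
    by (auto simp: HR_le1_def)
  have "IC (x * x * (t lA 1 + t 1 lB) ^ (dA + dB - 2)) < 0"
    unfolding x_eq degree_tensor_quadratic_form[OF a b lA lB dA dB]
    using HRA HRB unfolding HR_le1_def
    by (intro binomial_Lorentzian_combination_neg[OF dA dB _ _ _ _ orth strict]
        A.HR_0_imp_degree_power_pos[OF lA] B.HR_0_imp_degree_power_pos[OF lB]
        A.HR_le1_reverse_Cauchy_Schwarz[OF lA HRA a] B.HR_le1_reverse_Cauchy_Schwarz[OF lB HRB b])
      auto
  then show "0 < (-1) ^ 1 * IC (x * x * (t lA 1 + t 1 lB) ^ (dA + dB - 2 * 1))"
    by simp
qed

end

theorem proposition6p5:
  fixes GA :: "nat \<Rightarrow> 'a::{real_algebra_1,comm_ring_1} set" and IA :: "'a \<Rightarrow> real"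
    and GB :: "nat \<Rightarrow> 'b::{real_algebra_1,comm_ring_1} set" and IB :: "'b \<Rightarrow> real"
    and t :: "'a \<Rightarrow> 'b \<Rightarrow> 'c::{real_algebra_1,comm_ring_1}"
    and GC :: "nat \<Rightarrow> 'c set" and IC :: "'c \<Rightarrow> real"
    and dA dB :: nat and lA :: 'a and lB :: 'b
  assumes "pd_algebra GA dA IA" and "pd_algebra GB dB IB"
    and "dA \<ge> 1" and "dB \<ge> 1"
    and "lA \<in> GA 1" and "lB \<in> GB 1"
    and "tensor_pd_algebra GA dA IA GB dB IB t GC IC"
    and "HR_le1 GA dA IA lA" and "HR_le1 GB dB IB lB"
  shows "HR_le1 GC (dA + dB) IC (t lA 1 + t 1 lB)"
proof -
  interpret tensor_pd_algebras GA dA IA GB dB IB t GC IC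
    using assms(1,2,7) by unfold_locales
  show ?thesis
    using HR_0_tensor[OF assms(5,6)] HR_1_tensor[OF assms(5,6,3,4,8,9)] assms(8,9)
    by (simp add: HR_le1_def)
qed

end
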